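(* Assume the standing setting below and let $\{(x_k,\lambda_k)\}_{k\ge0}$ and directions $p_k$ ($k\ge1$) be generated by the Projected Newton iteration, where for each $k\ge1$ the step-length $\gamma_k\in(0,1]$ satisfies $\lambda_k>0$, the sufficient decrease condition $$\tfrac12\|F(x_k,\lambda_k)\|^2\le\left(\tfrac12-c\gamma_k\right)\|F(x_{k-1},\lambda_{k-1})\|^2$$ for a fixed $c\in(0,1)$, and the lower bound $$\gamma_k\ge\min\left(1,\ \frac{2(1-c)\tau\|F(x_{k-1},\lambda_{k-1})\|^2}{\zeta\|p_k\|^2}\right)$$ for fixed constants $\tau\in(0,1)$ and $\zeta>0$ (whenever $F(x_{k-1},\lambda_{k-1})\ne0$). Then either $\|F(x_k,\lambda_k)\|=0$ for some $k\ge0$, or $$\lim_{k\to\infty}\min\left(\|F(x_k,\lambda_k)\|,\ \frac{\|F(x_k,\lambda_k)\|^2}{\|p_{k+1}\|}\right)=0.$$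
   Context: Standing setting. $A\in\mathbb{R}^{m\times n}$ ($m\ge n$), $b\in\mathbb{R}^m$ with $\|b\|\ge\sigma>0$. $F(x,\lambda)=\begin{pmatrix}\lambda A^T(Ax-b)+x\\ \tfrac12\|Ax-b\|^2-\tfrac{\sigma^2}{2}\end{pmatrix}$. Golub–Kahan bidiagonalization (Bidiag1): $u_0=b/\|b\|$, $\nu_0v_{-1}=0$, for $j=0,1,\dots$: $r_j=A^Tu_j-\nu_jv_{j-1}$, $\mu_j=\|r_j\|$, $v_j=r_j/\mu_j$, $p_j=Av_j-\mu_ju_j$, $\nu_{j+1}=\|p_j\|$, $u_{j+1}=p_j/\nu_{j+1}$; no breakdown (all $\mu_j,\nu_j>0$) and exact orthonormality of $\{v_j\}$ and $\{u_j\}$ are assumed. $V_k=[v_0,\dots,v_{k-1}]$; $B_{k+1,k}\in\mathbb{R}^{(k+1)\times k}$ lower bidiagonal with diagonal $\mu_0,\dots,\mu_{k-1}$, subdiagonal $\nu_1,\dots,\nu_k$; $c_{k+1}=(\|b\|,0,\dots,0)^T\in\mathbb{R}^{k+1}$. $F^{(k)}(y,\lambda)=\begin{pmatrix}\lambda B_{k+1,k}^T(B_{k+1,k}y-c_{k+1})+y\\ \tfrac12\|B_{k+1,k}y-c_{k+1}\|^2-\tfrac{\sigma^2}{2}\end{pmatrix}$, $J^{(k)}$ its Jacobian in $(y,\lambda)$. Projected Newton iteration: $\lambda_0>0$, $x_0=0$, $\bar y_0=0\in\mathbb{R}^1$. For $k\ge1$: $(\Delta y_k,\Delta\lambda_k)=-J^{(k)}(\bar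 y_{k-1},\lambda_{k-1})^{-1}F^{(k)}(\bar y_{k-1},\lambda_{k-1})$, $p_k=(V_k\Delta y_k,\Delta\lambda_k)\in\mathbb{R}^{n+1}$, $y_k=\bar y_{k-1}+\gamma_k\Delta y_k$, $\lambda_k=\lambda_{k-1}+\gamma_k\Delta\lambda_k$, $\bar y_k=(y_k^T,0)^T$, $x_k=V_ky_k$. *)

theory Defs
  imports "HOL-Analysis.Analysis"
begin

text \<open>Vectors of (varying) dimension d are represented as functions nat => real,
  only the entries with index < d being relevant; matrices as nat => nat => real.\<close>

definition sqn :: "nat \<Rightarrow> (nat \<Rightarrow> real) \<Rightarrow> real" where
  "sqn d x = (\<Sum>i<d. (x i)^2)"

definition vn :: "nat \<Rightarrow> (nat \<Rightarrow> real) \<Rightarrow> real" where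
  "vn d x = sqrt (sqn d x)"

definition mv :: "(nat \<Rightarrow> nat \<Rightarrow> real) \<Rightarrow> nat \<Rightarrow> (nat \<Rightarrow> real) \<Rightarrow> nat \<Rightarrow> real" where
  "mv M d x = (\<lambda>i. \<Sum>j<d. M i j * x j)"

definition tmv :: "(nat \<Rightarrow> nat \<Rightarrow> real) \<Rightarrow> nat \<Rightarrow> (nat \<Rightarrow> real) \<Rightarrow> nat \<Rightarrow> real" where
  "tmv M r y = (\<lambda>j. \<Sum>i<r. M i j * y i)"

text \<open>First block of F: lam M^T (M x - c) + x  (M is r x d)\<close>
definition Fgrad :: "(nat \<Rightarrow> nat \<Rightarrow> real) \<Rightarrow> nat \<Rightarrow> nat \<Rightarrow> (nat \<Rightarrow> real) \<Rightarrow> (nat \<Rightarrow> real) \<Rightarrow> real \<Rightarrow> nat \<Rightarrow> real" where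
  "Fgrad M r d c x lam = (\<lambda>j. lam * tmv M r (\<lambda>i. mv M d x i - c i) j + x j)"

text \<open>Last entry of F: 1/2 ||M x - c||^2 - sigma^2/2\<close>
definition Fsec :: "(nat \<Rightarrow> nat \<Rightarrow> real) \<Rightarrow> nat \<Rightarrow> nat \<Rightarrow> (nat \<Rightarrow> real) \<Rightarrow> real \<Rightarrow> (nat \<Rightarrow> real) \<Rightarrow> real" where
  "Fsec M r d c \<sigma> x = sqn r (\<lambda>i. mv M d x i - c i) / 2 - \<sigma>^2 / 2"

definition Fnorm :: "(nat \<Rightarrow> nat \<Rightarrow> real) \<Rightarrow> nat \<Rightarrow> nat \<Rightarrow> (nat \<Rightarrow> real) \<Rightarrow> real \<Rightarrow> (nat \<Rightarrow> real) \<Rightarrow> real \<Rightarrow> real" where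
  "Fnorm M r d c \<sigma> x lam = sqrt (sqn d (Fgrad M r d c x lam) + (Fsec M r d c \<sigma> x)^2)"

text \<open>Lower bidiagonal matrix: diagonal mu_0, mu_1, ..., subdiagonal nu_1, nu_2, ...;
  B_{k+1,k} is its leading (k+1) x k block.\<close>
definition bidiag :: "(nat \<Rightarrow> real) \<Rightarrow> (nat \<Rightarrow> real) \<Rightarrow> nat \<Rightarrow> nat \<Rightarrow> real" where
  "bidiag \<mu> \<nu> = (\<lambda>i j. if i = j then \<mu> j else if i = Suc j then \<nu> i else 0)"

definition cvec :: "real \<Rightarrow> nat \<Rightarrow> real" where
  "cvec \<beta> = (\<lambda>i. if i = 0 then \<beta> else 0)"

text \<open>Projected map F^(k) as a map R^(k+1) -> R^(k+1); a point z encodes (y, lam)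
  with y = (z 0, ..., z (k-1)) and lam = z k; component i (i \<le> k).\<close>
definition Fproj :: "(nat \<Rightarrow> real) \<Rightarrow> (nat \<Rightarrow> real) \<Rightarrow> real \<Rightarrow> real \<Rightarrow> nat \<Rightarrow> (nat \<Rightarrow> real) \<Rightarrow> nat \<Rightarrow> real" where
  "Fproj \<mu> \<nu> \<beta> \<sigma> k z i =
     (if i < k then Fgrad (bidiag \<mu> \<nu>) (Suc k) k (cvec \<beta>) z (z k) i
      else Fsec (bidiag \<mu> \<nu>) (Suc k) k (cvec \<beta>) \<sigma> z)"

definition Jproj :: "(nat \<Rightarrow> real) \<Rightarrow> (nat \<Rightarrow> real) \<Rightarrow> real \<Rightarrow> real \<Rightarrow> nat \<Rightarrow> (nat \<Rightarrow> real) \<Rightarrow> nat \<Rightarrow> nat \<Rightarrow> real" where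
  "Jproj \<mu> \<nu> \<beta> \<sigma> k z i j = deriv (\<lambda>t. Fproj \<mu> \<nu> \<beta> \<sigma> k (z(j := z j + t)) i) 0"

definition Japply :: "(nat \<Rightarrow> real) \<Rightarrow> (nat \<Rightarrow> real) \<Rightarrow> real \<Rightarrow> real \<Rightarrow> nat \<Rightarrow> (nat \<Rightarrow> real) \<Rightarrow> (nat \<Rightarrow> real) \<Rightarrow> nat \<Rightarrow> real" where
  "Japply \<mu> \<nu> \<beta> \<sigma> k z d i = (\<Sum>j\<le>k. Jproj \<mu> \<nu> \<beta> \<sigma> k z i j * d j)"

definition Jnonsing :: "(nat \<Rightarrow> real) \<Rightarrow> (nat \<Rightarrow> real) \<Rightarrow> real \<Rightarrow> real \<Rightarrow> nat \<Rightarrow> (nat \<Rightarrow> real) \<Rightarrow> bool" where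
  "Jnonsing \<mu> \<nu> \<beta> \<sigma> k z =
     (\<forall>d. (\<forall>i\<le>k. Japply \<mu> \<nu> \<beta> \<sigma> k z d i = 0) \<longrightarrow> (\<forall>j\<le>k. d j = 0))"

text \<open>The point (ybar_{k-1}, lam_{k-1}) in R^(k+1): ybar_{k-1} = (y_{k-1}, 0) (and ybar_0 = 0).\<close>
definition zprev :: "(nat \<Rightarrow> nat \<Rightarrow> real) \<Rightarrow> (nat \<Rightarrow> real) \<Rightarrow> nat \<Rightarrow> nat \<Rightarrow> real" where
  "zprev y lam k = (\<lambda>j. if j < k - 1 then y (k - 1) j else if j = k then lam (k - 1) else 0)"

text \<open>||p_k|| where p_k = (V_k dy, dlam), dy = (d 0, ..., d (k-1)), dlam = d k,
  and V_k has columns v 0, ..., v (k-1) in R^n.\<close>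
definition pnorm :: "nat \<Rightarrow> (nat \<Rightarrow> nat \<Rightarrow> real) \<Rightarrow> nat \<Rightarrow> (nat \<Rightarrow> real) \<Rightarrow> real" where
  "pnorm n v k d = sqrt (sqn n (\<lambda>i. \<Sum>j<k. v j i * d j) + (d k)^2)"

end

theory Submission
  imports Defs
begin

text \<open>Only the line-search conditions matter. Sufficient decrease makes \<open>\<parallel>F\<^sub>k\<parallel>\<^sup>2\<close> a
  nonnegative decreasing sequence whose decrements dominate \<open>2c \<gamma>\<^sub>k\<^sub>+\<^sub>1 \<parallel>F\<^sub>k\<parallel>\<^sup>2\<close>, so
  \<open>\<gamma>\<^sub>k\<^sub>+\<^sub>1 \<parallel>F\<^sub>k\<parallel>\<^sup>2 \<rightarrow> 0\<close>. The lower bound on \<open>\<gamma>\<^sub>k\<^sub>+\<^sub>1\<close> gives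
  \<open>min(\<parallel>F\<^sub>k\<parallel>, \<parallel>F\<^sub>k\<parallel>\<^sup>2/\<parallel>p\<^sub>k\<^sub>+\<^sub>1\<parallel>)\<^sup>2 \<le> max(1, 1/K) \<gamma>\<^sub>k\<^sub>+\<^sub>1 \<parallel>F\<^sub>k\<parallel>\<^sup>2\<close> with
  \<open>K = 2(1-c)\<tau>/\<zeta>\<close>, and the claim follows.\<close>

lemma Fnorm_nonneg: "0 \<le> Fnorm A m n b \<sigma> x lam"
  by (simp add: Fnorm_def sqn_def sum_nonneg)

lemma pnorm_nonneg: "0 \<le> pnorm n v k d"
  by (simp add: pnorm_def sqn_def sum_nonneg)

lemma decrements_tendsto_zero:
  fixes f d :: "nat \<Rightarrow> real"
  assumes "0 < c" and f_nonneg: "\<And>k. 0 \<le> f k" and d_nonneg: "\<And>k. 0 \<le> d k"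
    and decrease: "\<And>k. f (Suc k) \<le> f k - c * d k"
  shows "d \<longlonglongrightarrow> 0"
proof -
  have "f (Suc k) \<le> f k" for k
    using decrease[of k] mult_nonneg_nonneg[OF less_imp_le[OF \<open>0 < c\<close>] d_nonneg[of k]] by linarith
  then have "decseq f"
    by (rule decseq_SucI)
  then obtain L where fL: "f \<longlonglongrightarrow> L"
    by (rule decseq_convergent[of f 0]) (use f_nonneg in auto)
  have "(\<lambda>k. (f k - f (Suc k)) / c) \<longlonglongrightarrow> (L - L) / c"
    by (intro tendsto_divide tendsto_diff fL LIMSEQ_Suc[OF fL] tendsto_const) (use \<open>0 < c\<close> in simp)
  then have diff0: "(\<lambda>k. (f k - f (Suc k)) / c) \<longlonglongrightarrow> 0"
    by simp
  show ?thesis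
  proof (rule real_tendsto_sandwich[OF _ _ tendsto_const diff0])
    show "\<forall>\<^sub>F k in sequentially. 0 \<le> d k"
      using d_nonneg by simp
    show "\<forall>\<^sub>F k in sequentially. d k \<le> (f k - f (Suc k)) / c"
      using \<open>0 < c\<close> decrease by (simp add: field_simps mult.commute)
  qed
qed

lemma tendsto_zero_if_square_bounded:
  fixes g e :: "nat \<Rightarrow> real"
  assumes g_nonneg: "\<And>k. 0 \<le> g k" and bound: "\<And>k. (g k)\<^sup>2 \<le> C * e k" and "e \<longlonglongrightarrow> 0"
  shows "g \<longlonglongrightarrow> 0"
proof -
  have "(\<lambda>k. C * e k) \<longlonglongrightarrow> 0"
    using tendsto_mult_right_zero[OF \<open>e \<longlonglongrightarrow> 0\<close>] .
  then have "(\<lambda>k. (g k)\<^sup>2) \<longlonglongrightarrow> 0"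
  proof (rule real_tendsto_sandwich[OF _ _ tendsto_const, rotated 2])
    show "\<forall>\<^sub>F k in sequentially. 0 \<le> (g k)\<^sup>2"
      by simp
    show "\<forall>\<^sub>F k in sequentially. (g k)\<^sup>2 \<le> C * e k"
      using bound by simp
  qed
  then have "(\<lambda>k. sqrt ((g k)\<^sup>2)) \<longlonglongrightarrow> sqrt 0"
    by (rule tendsto_real_sqrt)
  then show ?thesis
    using g_nonneg by simp
qed

lemma min_residual_square_le_step:
  fixes F P K \<gamma> :: real
  assumes "0 \<le> F" "0 \<le> P" "0 < K" "0 \<le> \<gamma>"
    and step_lb: "F \<noteq> 0 \<Longrightarrow> min 1 (K * F\<^sup>2 / P\<^sup>2) \<le> \<gamma>"
  shows "(min F (F\<^sup>2 / P))\<^sup>2 \<le> max 1 (1 / K) * (\<gamma> * F\<^sup>2)"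
proof -
  let ?g = "min F (F\<^sup>2 / P)" and ?C = "max 1 (1 / K)"
  have g_nonneg: "0 \<le> ?g"
    using assms by simp
  have rhs_nonneg: "0 \<le> ?C * (\<gamma> * F\<^sup>2)"
    using assms by simp
  show ?thesis
  proof (cases "F = 0 \<or> P = 0")
    case True
    then have "?g = 0"
      using assms(1) by auto
    then show ?thesis
      using rhs_nonneg by simp
  next
    case False
    then have lb: "min 1 (K * F\<^sup>2 / P\<^sup>2) \<le> \<gamma>" and "0 < P"
      using step_lb assms(2) by auto
    show ?thesis
    proof (cases "1 \<le> K * F\<^sup>2 / P\<^sup>2")
      case True
      with lb have "1 \<le> \<gamma>" by simp
      have "?g\<^sup>2 \<le> F\<^sup>2"
        using g_nonneg by (simp add: power_mono)
      also have "\<dots> \<le> \<gamma> * F\<^sup>2"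
        using \<open>1 \<le> \<gamma>\<close> mult_right_mono[of 1 \<gamma> "F\<^sup>2"] by simp
      also have "\<dots> \<le> ?C * (\<gamma> * F\<^sup>2)"
        using assms(4) mult_right_mono[of 1 ?C "\<gamma> * F\<^sup>2"] by simp
      finally show ?thesis .
    next
      case False
      with lb have \<gamma>_lb: "K * F\<^sup>2 / P\<^sup>2 \<le> \<gamma>" by simp
      have "?g\<^sup>2 \<le> (F\<^sup>2 / P)\<^sup>2"
        using g_nonneg by (simp add: power_mono)
      also have "\<dots> = (1 / K) * ((K * F\<^sup>2 / P\<^sup>2) * F\<^sup>2)"
        using \<open>0 < K\<close> by (simp add: power_divide power2_eq_square)
      also have "\<dots> \<le> (1 / K) * (\<gamma> * F\<^sup>2)"
        using \<gamma>_lb \<open>0 < K\<close> by (intro mult_left_mono mult_right_mono) auto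
      also have "\<dots> \<le> ?C * (\<gamma> * F\<^sup>2)"
        using assms(4) by (intro mult_right_mono) auto
      finally show ?thesis .
    qed
  qed
qed

theorem theorem4p2:
  fixes m n :: nat and A :: "nat \<Rightarrow> nat \<Rightarrow> real" and b :: "nat \<Rightarrow> real" and \<sigma> :: real
    and u v :: "nat \<Rightarrow> nat \<Rightarrow> real" and \<mu> \<nu> :: "nat \<Rightarrow> real"
    and x y dl :: "nat \<Rightarrow> nat \<Rightarrow> real" and lam \<gamma> :: "nat \<Rightarrow> real"
    and c \<tau> \<zeta> :: real
  assumes mn: "n \<le> m"
    and sig: "0 < \<sigma>" "\<sigma> \<le> vn m b"
    and u0: "\<forall>i<m. u 0 i = b i / vn m b"
    and mu_def: "\<forall>j. \<mu> j = vn n (\<lambda>i. tmv A m (u j) i - (if j = 0 then 0 else \<nu> j * v (j - 1) i))"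
    and v_def: "\<forall>j. \<forall>i<n. v j i = (tmv A m (u j) i - (if j = 0 then 0 else \<nu> j * v (j - 1) i)) / \<mu> j"
    and nu_def: "\<forall>j. \<nu> (Suc j) = vn m (\<lambda>i. mv A n (v j) i - \<mu> j * u j i)"
    and u_def: "\<forall>j. \<forall>i<m. u (Suc j) i = (mv A n (v j) i - \<mu> j * u j i) / \<nu> (Suc j)"
    and nobreak: "\<forall>j<n. 0 < \<mu> j" "\<forall>j. 1 \<le> j \<and> j < n \<longrightarrow> 0 < \<nu> j"
    and orth_v: "\<forall>j<n. \<forall>l<n. (\<Sum>i<n. v j i * v l i) = (if j = l then 1 else 0)"
    and orth_u: "\<forall>j<n. \<forall>l<n. (\<Sum>i<m. u j i * u l i) = (if j = l then 1 else 0)"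
    and lam0: "0 < lam 0"
    and x0: "\<forall>i<n. x 0 i = 0"
    and newton: "\<forall>k\<ge>1. Jnonsing \<mu> \<nu> (vn m b) \<sigma> k (zprev y lam k) \<and>
        (\<forall>i\<le>k. Japply \<mu> \<nu> (vn m b) \<sigma> k (zprev y lam k) (dl k) i
                 = - Fproj \<mu> \<nu> (vn m b) \<sigma> k (zprev y lam k) i)"
    and step: "\<forall>k\<ge>1. (\<forall>j<k. y k j = zprev y lam k j + \<gamma> k * dl k j) \<and>
        lam k = lam (k - 1) + \<gamma> k * dl k k"
    and xk: "\<forall>k\<ge>1. \<forall>i<n. x k i = (\<Sum>j<k. v j i * y k j)"
    and c: "0 < c" "c < 1"
    and \<tau>: "0 < \<tau>" "\<tau> < 1"
    and \<zeta>: "0 < \<zeta>"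
    and gam: "\<forall>k\<ge>1. 0 < \<gamma> k \<and> \<gamma> k \<le> 1 \<and> 0 < lam k \<and>
        (1/2) * (Fnorm A m n b \<sigma> (x k) (lam k))^2
          \<le> (1/2 - c * \<gamma> k) * (Fnorm A m n b \<sigma> (x (k - 1)) (lam (k - 1)))^2 \<and>
        (Fnorm A m n b \<sigma> (x (k - 1)) (lam (k - 1)) \<noteq> 0 \<longrightarrow>
          \<gamma> k \<ge> min 1 (2 * (1 - c) * \<tau> * (Fnorm A m n b \<sigma> (x (k - 1)) (lam (k - 1)))^2
                        / (\<zeta> * (pnorm n v k (dl k))^2)))"
  shows "(\<exists>k. Fnorm A m n b \<sigma> (x k) (lam k) = 0) \<or>
         (\<lambda>k. min (Fnorm A m n b \<sigma> (x k) (lam k))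
                   ((Fnorm A m n b \<sigma> (x k) (lam k))^2 / pnorm n v (Suc k) (dl (Suc k))))
           \<longlonglongrightarrow> 0"
proof -
  define F where "F k = Fnorm A m n b \<sigma> (x k) (lam k)" for k
  define P where "P k = pnorm n v k (dl k)" for k
  define K where "K = 2 * (1 - c) * \<tau> / \<zeta>"
  have F_nonneg: "0 \<le> F k" for k
    by (simp add: F_def Fnorm_nonneg)
  have gam_Suc: "0 \<le> \<gamma> (Suc k)"
      "(F (Suc k))\<^sup>2 \<le> (F k)\<^sup>2 - 2 * c * (\<gamma> (Suc k) * (F k)\<^sup>2)"
      "F k \<noteq> 0 \<Longrightarrow> min 1 (K * (F k)\<^sup>2 / (P (Suc k))\<^sup>2) \<le> \<gamma> (Suc k)" for k
  proof -
    have "0 < \<gamma> (Suc k)"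
      and decrease: "(1/2) * (F (Suc k))\<^sup>2 \<le> (1/2 - c * \<gamma> (Suc k)) * (F k)\<^sup>2"
      and lower: "F k \<noteq> 0 \<Longrightarrow>
        min 1 (2 * (1 - c) * \<tau> * (F k)\<^sup>2 / (\<zeta> * (P (Suc k))\<^sup>2)) \<le> \<gamma> (Suc k)"
      using gam[rule_format, of "Suc k"] unfolding F_def P_def by simp_all
    then show "0 \<le> \<gamma> (Suc k)"
      by simp
    show "(F (Suc k))\<^sup>2 \<le> (F k)\<^sup>2 - 2 * c * (\<gamma> (Suc k) * (F k)\<^sup>2)"
      using decrease by (simp add: algebra_simps)
    show "F k \<noteq> 0 \<Longrightarrow> min 1 (K * (F k)\<^sup>2 / (P (Suc k))\<^sup>2) \<le> \<gamma> (Suc k)"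
      using lower by (simp add: K_def)
  qed
  have P_nonneg: "0 \<le> P k" for k
    by (simp add: P_def pnorm_nonneg)
  have "0 < K"
    using c \<tau> \<zeta> by (simp add: K_def)
  have "(\<lambda>k. \<gamma> (Suc k) * (F k)\<^sup>2) \<longlonglongrightarrow> 0"
    by (rule decrements_tendsto_zero[where c = "2 * c" and f = "\<lambda>k. (F k)\<^sup>2"])
      (use c gam_Suc(1,2) in auto)
  moreover have "(min (F k) ((F k)\<^sup>2 / P (Suc k)))\<^sup>2 \<le> max 1 (1 / K) * (\<gamma> (Suc k) * (F k)\<^sup>2)" for k
    by (rule min_residual_square_le_step[OF F_nonneg P_nonneg \<open>0 < K\<close> gam_Suc(1,3)])
  ultimately have "(\<lambda>k. min (F k) ((F k)\<^sup>2 / P (Suc k))) \<longlonglongrightarrow> 0"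
    by (intro tendsto_zero_if_square_bounded[where g = "\<lambda>k. min (F k) ((F k)\<^sup>2 / P (Suc k))"])
      (simp_all add: F_nonneg P_nonneg)
  then show ?thesis
    by (simp add: F_def P_def)
qed

end
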